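(* Let $\tfrac12\le\gamma$ and $a=\tfrac12$. Let $\overline{F}_0\ge0$ be a function of $(s,\rho)$, $s\in\mathbb{R}$, $\rho\ge0$, and for $t\ge0$, $r>0$ define $$\overline{\phi}(t,r)=\frac4r\int_{t+r}^\infty\int_{t-r}^{t+r}\rho\,\overline{F}_0(s,\rho)\,d\eta\,d\xi,\qquad s=\frac{\xi+\eta}2,\ \rho=\frac{\xi-\eta}2.$$ Suppose that for all $(\xi,\eta)$ with $|\eta|\le\xi$, $$\rho\,\overline{F}_0(s,\rho)\le\frac{1}{\langle\xi\rangle\langle\eta\rangle^{2+2\gamma}}\chi_{\xi^a<\eta<\xi/2}.$$ Then $\overline{\phi}(t,r)\lesssim\langle t+r\rangle^{-2}$.
   Context: $\langle x\rangle=(1+x^2)^{1/2}$, $\chi_A$ denotes the indicator function of the set $A$, and $\lesssim$ means bounded by a constant multiple independent of $t,r$. *)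

theory Defs
  imports "HOL-Analysis.Analysis"
begin

definition jbr :: "real \<Rightarrow> real" where
  "jbr x = sqrt (1 + x\<^sup>2)"

text \<open>phibar(t,r) = 4/r * int_{t+r}^inf int_{t-r}^{t+r} rho F0(s,rho) d eta d xi,
  with s = (xi+eta)/2, rho = (xi-eta)/2.  The integrand is nonnegative on the
  domain of integration, so we use the nonnegative (extended) Lebesgue integral.\<close>
definition phibar :: "(real \<Rightarrow> real \<Rightarrow> real) \<Rightarrow> real \<Rightarrow> real \<Rightarrow> ennreal" where
  "phibar F0 t r = ennreal (4 / r) *
     (\<integral>\<^sup>+ \<xi>\<in>{t+r..}. (\<integral>\<^sup>+ \<eta>\<in>{t-r..t+r}.
        ennreal (((\<xi> - \<eta>) / 2) * F0 ((\<xi> + \<eta>) / 2) ((\<xi> - \<eta>) / 2)) \<partial>lborel) \<partial>lborel)"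

end

theory Submission
  imports Defs
begin

(* In the null coordinates the hypothesis confines the integrand to sqrt xi < eta <= t + r <= xi,
   where it is at most 1 / (xi eta^3); in particular it vanishes unless t + r > 1.
   If r > (t + r) / 4, integrate eta over (sqrt xi, oo) and then xi over [t + r, oo) to get
   1 / (2 (t + r)), which the prefactor 4 / r turns into at most 8 / (t + r)^2.
   If r <= (t + r) / 4, then eta >= (t + r) / 2 and eta^2 > xi bound the integrand by
   2 / ((t + r) xi^2) on an eta-interval of length 2 r, which gives 16 / (t + r)^2 in total. *)

lemma nn_integral_divide_power_atLeast:
  fixes a c :: real and n :: nat
  assumes "a > 0" "c \<ge> 0" "n > 0"
  shows "(\<integral>\<^sup>+x\<in>{a..}. ennreal (c / x ^ Suc n) \<partial>lborel) = ennreal (c / (n * a ^ n))"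
proof -
  have "(\<integral>\<^sup>+x\<in>{a..}. ennreal (c / x ^ Suc n) \<partial>lborel) = ennreal (0 - (- c / (n * a ^ n)))"
  proof (rule nn_integral_FTC_atLeast)
    fix x assume "a \<le> x"
    then have "x > 0" using assms by linarith
    then show "((\<lambda>x. - c / (n * x ^ n)) has_real_derivative c / x ^ Suc n) (at x)"
      using assms by (auto intro!: derivative_eq_intros simp: field_simps power_Suc2 [symmetric] power_diff)
    show "0 \<le> c / x ^ Suc n" using \<open>x > 0\<close> assms by simp
  next
    show "((\<lambda>x. - c / (real n * x ^ n)) \<longlongrightarrow> 0) at_top"
      using assms by (intro tendsto_divide_0[OF tendsto_const] filterlim_at_top_imp_at_infinity
          filterlim_tendsto_pos_mult_at_top[OF tendsto_const] filterlim_pow_at_top filterlim_ident) auto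
  qed simp
  then show ?thesis by simp
qed

lemma abs_le_jbr: "\<bar>x\<bar> \<le> jbr x"
  unfolding jbr_def by (simp add: real_le_rsqrt)

lemma one_le_jbr: "1 \<le> jbr x"
  unfolding jbr_def by simp

lemma jbr_powr_minus_two: "jbr x powr -2 = 1 / (1 + x\<^sup>2)"
proof -
  have "jbr x > 0" using one_le_jbr[of x] by linarith
  then have "jbr x powr -2 = 1 / jbr x ^ 2" by (simp add: powr_minus powr_realpow divide_inverse)
  then show ?thesis unfolding jbr_def by (simp add: add_nonneg_nonneg)
qed

lemma inverse_jbr_weight_le:
  fixes x y \<gamma> :: real
  assumes "x > 0" "y > 0" "1/2 \<le> \<gamma>"
  shows "1 / (jbr x * jbr y powr (2 + 2 * \<gamma>)) \<le> 1 / (x * y ^ 3)"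
proof -
  have "y ^ 3 = y powr 3" using assms by (simp add: powr_realpow)
  also have "\<dots> \<le> jbr y powr 3" using assms abs_le_jbr[of y] by (intro powr_mono2) auto
  also have "\<dots> \<le> jbr y powr (2 + 2 * \<gamma>)" using assms one_le_jbr[of y] by (intro powr_mono) auto
  finally have "x * y ^ 3 \<le> jbr x * jbr y powr (2 + 2 * \<gamma>)"
    using assms abs_le_jbr[of x] by (intro mult_mono) auto
  moreover have "0 < jbr x * jbr y powr (2 + 2 * \<gamma>)"
    using one_le_jbr[of x] one_le_jbr[of y] by simp
  ultimately show ?thesis using assms by (intro divide_left_mono) auto
qed

lemma ennreal_le_inverse_cube_weight:
  fixes \<xi> \<eta> v \<gamma> :: real
  assumes "1/2 \<le> \<gamma>" "\<xi> > 0"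
    and v_le: "v \<le> 1 / (jbr \<xi> * jbr \<eta> powr (2 + 2 * \<gamma>))
                 * indicator {\<eta>'. \<xi> powr (1/2) < \<eta>' \<and> \<eta>' < \<xi> / 2} \<eta>"
  shows "ennreal v \<le> ennreal (1 / (\<xi> * \<eta> ^ 3)) * indicator {sqrt \<xi><..} \<eta>"
proof (cases "sqrt \<xi> < \<eta>")
  case True
  then have "\<eta> > 0" using assms(2) by (meson less_trans real_sqrt_gt_zero)
  have "0 \<le> 1 / (jbr \<xi> * jbr \<eta> powr (2 + 2 * \<gamma>))"
    using one_le_jbr[of \<xi>] by simp
  then have "v \<le> 1 / (jbr \<xi> * jbr \<eta> powr (2 + 2 * \<gamma>))"
    using v_le by (smt (verit) indicator_le_1 mult_left_le)
  also have "\<dots> \<le> 1 / (\<xi> * \<eta> ^ 3)" using inverse_jbr_weight_le assms \<open>\<eta> > 0\<close> by blast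
  finally show ?thesis using True by (simp add: ennreal_leI)
next
  case False
  then have "v \<le> 0" using v_le assms(2) by (simp add: powr_half_sqrt)
  then show ?thesis by (simp add: ennreal_neg)
qed

lemma set_nn_integral_mono:
  "(\<And>x. x \<in> A \<Longrightarrow> f x \<le> g x) \<Longrightarrow> (\<integral>\<^sup>+x\<in>A. f x \<partial>M) \<le> (\<integral>\<^sup>+x\<in>A. g x \<partial>M)"
  by (auto intro!: nn_integral_mono split: split_indicator)

lemma set_nn_integral_eq_0:
  "(\<And>x. x \<in> A \<Longrightarrow> f x = 0) \<Longrightarrow> (\<integral>\<^sup>+x\<in>A. f x \<partial>M) = 0"
  using set_nn_integral_mono[of A f "\<lambda>_. 0" M] by simp

context
  fixes K :: "real \<Rightarrow> real \<Rightarrow> ennreal"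
  assumes K_le: "\<And>\<xi> \<eta>. \<xi> > 0 \<Longrightarrow> \<bar>\<eta>\<bar> \<le> \<xi> \<Longrightarrow>
    K \<xi> \<eta> \<le> ennreal (1 / (\<xi> * \<eta> ^ 3)) * indicator {sqrt \<xi><..} \<eta>"
begin

lemma cone_integral_eq_0:
  assumes "t \<ge> 0" "r > 0" "t + r \<le> 1"
  shows "(\<integral>\<^sup>+\<xi>\<in>{t+r..}. (\<integral>\<^sup>+\<eta>\<in>{t-r..t+r}. K \<xi> \<eta> \<partial>lborel) \<partial>lborel) = 0"
proof -
  have "K \<xi> \<eta> = 0" if "t + r \<le> \<xi>" "t - r \<le> \<eta>" "\<eta> \<le> t + r" for \<xi> \<eta>
  proof -
    have "t + r \<le> sqrt (t + r)" using assms by (intro real_le_rsqrt) (simp add: power2_eq_square mult_le_one)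
    also have "\<dots> \<le> sqrt \<xi>" using that by simp
    finally have "\<eta> \<le> sqrt \<xi>" using that by linarith
    then show ?thesis using K_le[of \<xi> \<eta>] that assms by simp
  qed
  then have "(\<integral>\<^sup>+\<eta>\<in>{t-r..t+r}. K \<xi> \<eta> \<partial>lborel) = 0" if "t + r \<le> \<xi>" for \<xi>
    using that by (intro set_nn_integral_eq_0) auto
  then show ?thesis by (rule set_nn_integral_eq_0) simp
qed

lemma cone_integral_le_wide:
  assumes "t \<ge> 0" "r > 0"
  shows "(\<integral>\<^sup>+\<xi>\<in>{t+r..}. (\<integral>\<^sup>+\<eta>\<in>{t-r..t+r}. K \<xi> \<eta> \<partial>lborel) \<partial>lborel) \<le> ennreal (1 / (2 * (t + r)))"
proof -
  have "(\<integral>\<^sup>+\<eta>\<in>{t-r..t+r}. K \<xi> \<eta> \<partial>lborel) \<le> ennreal ((1 / 2) / \<xi> ^ Suc 1)"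
    if "t + r \<le> \<xi>" for \<xi>
  proof -
    have "\<xi> > 0" using that assms by linarith
    have "(\<integral>\<^sup>+\<eta>\<in>{t-r..t+r}. K \<xi> \<eta> \<partial>lborel) \<le> (\<integral>\<^sup>+\<eta>\<in>{sqrt \<xi>..}. ennreal ((1 / \<xi>) / \<eta> ^ Suc 2) \<partial>lborel)"
    proof (intro nn_integral_mono)
      fix \<eta> :: real
      show "K \<xi> \<eta> * indicator {t-r..t+r} \<eta> \<le> ennreal ((1 / \<xi>) / \<eta> ^ Suc 2) * indicator {sqrt \<xi>..} \<eta>"
      proof (cases "\<eta> \<in> {t-r..t+r}")
        case True
        then have "K \<xi> \<eta> \<le> ennreal (1 / (\<xi> * \<eta> ^ 3)) * indicator {sqrt \<xi><..} \<eta>"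
          using assms that by (intro K_le) auto
        also have "\<dots> \<le> ennreal ((1 / \<xi>) / \<eta> ^ Suc 2) * indicator {sqrt \<xi>..} \<eta>"
          by (intro mult_mono) (auto simp: indicator_def)
        finally show ?thesis using True by simp
      qed simp
    qed
    also have "\<dots> = ennreal ((1 / 2) / \<xi> ^ Suc 1)"
      using \<open>\<xi> > 0\<close> by (subst nn_integral_divide_power_atLeast) (auto simp: power2_eq_square)
    finally show ?thesis .
  qed
  then have "(\<integral>\<^sup>+\<xi>\<in>{t+r..}. (\<integral>\<^sup>+\<eta>\<in>{t-r..t+r}. K \<xi> \<eta> \<partial>lborel) \<partial>lborel)
      \<le> (\<integral>\<^sup>+\<xi>\<in>{t+r..}. ennreal ((1 / 2) / \<xi> ^ Suc 1) \<partial>lborel)"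
    by (intro set_nn_integral_mono) auto
  also have "\<dots> = ennreal (1 / (2 * (t + r)))"
    using assms by (subst nn_integral_divide_power_atLeast) auto
  finally show ?thesis .
qed

lemma cone_integrand_le_narrow:
  assumes "t \<ge> 0" "r > 0" "4 * r \<le> t + r"
    and in_cone: "t + r \<le> \<xi>" "\<eta> \<in> {t-r..t+r}"
  shows "K \<xi> \<eta> \<le> ennreal ((2 / (t + r)) / \<xi>\<^sup>2)"
proof (cases "sqrt \<xi> < \<eta>")
  case True
  have "\<xi> > 0" "\<eta> > 0" "(t + r) / 2 \<le> \<eta>" using in_cone assms by auto
  have "(sqrt \<xi>)\<^sup>2 < \<eta>\<^sup>2" using True \<open>\<xi> > 0\<close> by (intro power_strict_mono) auto
  then have "\<xi> * ((t + r) / 2) \<le> \<eta>\<^sup>2 * \<eta>"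
    using \<open>\<xi> > 0\<close> \<open>(t + r) / 2 \<le> \<eta>\<close> assms by (intro mult_mono) auto
  then have "\<xi> * (\<xi> * ((t + r) / 2)) \<le> \<xi> * (\<eta>\<^sup>2 * \<eta>)"
    using \<open>\<xi> > 0\<close> by (intro mult_left_mono) auto
  then have "\<xi>\<^sup>2 * ((t + r) / 2) \<le> \<xi> * \<eta> ^ 3"
    by (simp add: power2_eq_square power3_eq_cube ac_simps)
  then have "1 / (\<xi> * \<eta> ^ 3) \<le> 1 / (\<xi>\<^sup>2 * ((t + r) / 2))"
    using \<open>\<xi> > 0\<close> \<open>\<eta> > 0\<close> assms by (intro divide_left_mono) auto
  also have "\<dots> = (2 / (t + r)) / \<xi>\<^sup>2" by simp
  finally have "1 / (\<xi> * \<eta> ^ 3) \<le> (2 / (t + r)) / \<xi>\<^sup>2" .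
  moreover have "K \<xi> \<eta> \<le> ennreal (1 / (\<xi> * \<eta> ^ 3)) * indicator {sqrt \<xi><..} \<eta>"
    using in_cone assms by (intro K_le) auto
  ultimately show ?thesis using True by (simp add: ennreal_leI order_trans)
next
  case False
  then show ?thesis using K_le[of \<xi> \<eta>] in_cone assms by simp
qed

lemma cone_integral_le_narrow:
  assumes "t \<ge> 0" "r > 0" "4 * r \<le> t + r"
  shows "(\<integral>\<^sup>+\<xi>\<in>{t+r..}. (\<integral>\<^sup>+\<eta>\<in>{t-r..t+r}. K \<xi> \<eta> \<partial>lborel) \<partial>lborel) \<le> ennreal (4 * r / (t + r)\<^sup>2)"
proof -
  have "(\<integral>\<^sup>+\<eta>\<in>{t-r..t+r}. K \<xi> \<eta> \<partial>lborel) \<le> ennreal ((4 * r / (t + r)) / \<xi> ^ Suc 1)"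
    if "t + r \<le> \<xi>" for \<xi>
  proof -
    have "(\<integral>\<^sup>+\<eta>\<in>{t-r..t+r}. K \<xi> \<eta> \<partial>lborel) \<le> (\<integral>\<^sup>+\<eta>\<in>{t-r..t+r}. ennreal ((2 / (t + r)) / \<xi>\<^sup>2) \<partial>lborel)"
      using cone_integrand_le_narrow assms that by (intro set_nn_integral_mono) auto
    also have "\<dots> = ennreal ((2 / (t + r)) / \<xi>\<^sup>2) * ennreal (2 * r)"
      using assms by (simp add: nn_integral_cmult_indicator)
    also have "\<dots> = ennreal ((2 / (t + r)) / \<xi>\<^sup>2 * (2 * r))"
      using assms by (intro ennreal_mult[symmetric]) auto
    also have "\<dots> = ennreal ((4 * r / (t + r)) / \<xi> ^ Suc 1)"
      by (simp add: power2_eq_square)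
    finally show ?thesis by simp
  qed
  then have "(\<integral>\<^sup>+\<xi>\<in>{t+r..}. (\<integral>\<^sup>+\<eta>\<in>{t-r..t+r}. K \<xi> \<eta> \<partial>lborel) \<partial>lborel)
      \<le> (\<integral>\<^sup>+\<xi>\<in>{t+r..}. ennreal ((4 * r / (t + r)) / \<xi> ^ Suc 1) \<partial>lborel)"
    by (intro set_nn_integral_mono) auto
  also have "\<dots> = ennreal (4 * r / (t + r)\<^sup>2)"
    using assms by (subst nn_integral_divide_power_atLeast) (auto simp: power2_eq_square)
  finally show ?thesis .
qed

lemma cone_integral_scaled_le_inverse_square:
  assumes "t \<ge> 0" "r > 0"
  shows "ennreal (4 / r) * (\<integral>\<^sup>+\<xi>\<in>{t+r..}. (\<integral>\<^sup>+\<eta>\<in>{t-r..t+r}. K \<xi> \<eta> \<partial>lborel) \<partial>lborel)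
    \<le> ennreal (16 / (t + r)\<^sup>2)"
proof (cases "4 * r \<le> t + r")
  case True
  then have "ennreal (4 / r) * (\<integral>\<^sup>+\<xi>\<in>{t+r..}. (\<integral>\<^sup>+\<eta>\<in>{t-r..t+r}. K \<xi> \<eta> \<partial>lborel) \<partial>lborel)
      \<le> ennreal (4 / r) * ennreal (4 * r / (t + r)\<^sup>2)"
    using assms by (intro mult_left_mono cone_integral_le_narrow) auto
  also have "\<dots> = ennreal (16 / (t + r)\<^sup>2)"
    using assms by (simp flip: ennreal_mult)
  finally show ?thesis .
next
  case False
  then have "ennreal (4 / r) * (\<integral>\<^sup>+\<xi>\<in>{t+r..}. (\<integral>\<^sup>+\<eta>\<in>{t-r..t+r}. K \<xi> \<eta> \<partial>lborel) \<partial>lborel)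
      \<le> ennreal (4 / r) * ennreal (1 / (2 * (t + r)))"
    using assms by (intro mult_left_mono cone_integral_le_wide) auto
  also have "\<dots> = ennreal (4 / r * (1 / (2 * (t + r))))"
    using assms by (intro ennreal_mult[symmetric]) auto
  also have "\<dots> \<le> ennreal (16 / (t + r)\<^sup>2)"
  proof (intro ennreal_leI)
    have wide_le: "4 / r * (1 / (2 * T)) \<le> 16 / T\<^sup>2" if "0 < T" "T < 4 * r" for T
    proof -
      have "T * T \<le> 4 * r * T" using that by (intro mult_right_mono) auto
      then show ?thesis using that assms by (simp add: field_simps power2_eq_square)
    qed
    show "4 / r * (1 / (2 * (t + r))) \<le> 16 / (t + r)\<^sup>2"
      using False assms by (intro wide_le) auto
  qed
  finally show ?thesis .
qed

lemma cone_integral_scaled_le: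
  assumes "t \<ge> 0" "r > 0"
  shows "ennreal (4 / r) * (\<integral>\<^sup>+\<xi>\<in>{t+r..}. (\<integral>\<^sup>+\<eta>\<in>{t-r..t+r}. K \<xi> \<eta> \<partial>lborel) \<partial>lborel)
    \<le> ennreal (32 / (1 + (t + r)\<^sup>2))"
proof (cases "t + r \<le> 1")
  case True
  then show ?thesis using assms by (simp add: cone_integral_eq_0)
next
  case False
  have "16 / T\<^sup>2 \<le> 32 / (1 + T\<^sup>2)" if "1 < T" for T :: real
  proof -
    have "1 \<le> T\<^sup>2" using that by (simp add: less_imp_le one_le_power)
    then have "32 / (2 * T\<^sup>2) \<le> 32 / (1 + T\<^sup>2)" by (intro divide_left_mono mult_pos_pos) auto
    then show ?thesis by simp
  qed
  then have "ennreal (16 / (t + r)\<^sup>2) \<le> ennreal (32 / (1 + (t + r)\<^sup>2))"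
    using False by (intro ennreal_leI) simp
  with cone_integral_scaled_le_inverse_square[OF assms] show ?thesis by (rule order_trans)
qed

end

theorem lemmaA2:
  fixes \<gamma> :: real and F0 :: "real \<Rightarrow> real \<Rightarrow> real"
  assumes "1/2 \<le> \<gamma>"
    and "\<And>s \<rho>. \<rho> \<ge> 0 \<Longrightarrow> F0 s \<rho> \<ge> 0"
    and "\<And>\<xi> \<eta>. \<bar>\<eta>\<bar> \<le> \<xi> \<Longrightarrow>
          ((\<xi> - \<eta>) / 2) * F0 ((\<xi> + \<eta>) / 2) ((\<xi> - \<eta>) / 2)
          \<le> 1 / (jbr \<xi> * jbr \<eta> powr (2 + 2 * \<gamma>))
             * indicator {\<eta>'. \<xi> powr (1/2) < \<eta>' \<and> \<eta>' < \<xi> / 2} \<eta>"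
  shows "\<exists>C. \<forall>t r. t \<ge> 0 \<longrightarrow> r > 0 \<longrightarrow>
           phibar F0 t r \<le> ennreal (C * jbr (t + r) powr (-2))"
proof -
  have integrand_le: "ennreal ((\<xi> - \<eta>) / 2 * F0 ((\<xi> + \<eta>) / 2) ((\<xi> - \<eta>) / 2))
      \<le> ennreal (1 / (\<xi> * \<eta> ^ 3)) * indicator {sqrt \<xi><..} \<eta>"
    if "\<xi> > 0" "\<bar>\<eta>\<bar> \<le> \<xi>" for \<xi> \<eta>
    using assms(1) that(1) assms(3)[OF that(2)] by (rule ennreal_le_inverse_cube_weight)
  have "phibar F0 t r \<le> ennreal (32 * jbr (t + r) powr (-2))" if "t \<ge> 0" "r > 0" for t r
    using cone_integral_scaled_le[OF integrand_le that] by (simp add: phibar_def jbr_powr_minus_two)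
  then show ?thesis by auto
qed

end
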